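(* For $d\geq 0$ and $n\geq 1$ let $\psi_d(n)=n^d$. For $n\geq 3$ define \[ D^{\psi}(n):=\begin{cases} 2n\log_{9/8}(2), & n\equiv 0\pmod 3,\\ 2n\log_{9/8}(2)+\log_{9/8}(3)-\log_{9/8}(n+2), & n\equiv 1\pmod 3,\\ (n+2)\log_{9/8}(2), & n\equiv 2\pmod 3,\ n\neq 5,\\ \log_{9/8}(512), & n=5. \end{cases} \] Let $n\geq 3$ and let $d$ be an integer with $d>D^{\psi}(n)$. Then \[ \frac{\bigl(q^{\psi_d}(n)\bigr)^2}{q^{\psi_d}(n-1)\,q^{\psi_d}(n+1)}<1 \quad\text{if and only if}\quad n\equiv 1\pmod 3 . \]
   Context: For a double sequence $\{g_d(n)\}_{d\geq 0,n\geq 1}$ of positive reals, the numbers $q^{g_d}(n)$ ($n\geq 0$) are defined as the coefficients of the power series \[ \sum_{n=0}^{\infty} q^{g_d}(n)\,t^n := \frac{1}{1-\sum_{n=1}^{\infty} g_d(n)\,t^n}. \] Here $g_d=\psi_d$, i.e. $\sum_n q^{\psi_d}(n)t^n = 1/(1-\sum_{n\ge1} n^d t^n)$. $\log_{9/8}$ denotes the logarithm to base $9/8$. *)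

theory Defs
  imports "HOL-Analysis.Analysis" "HOL-Computational_Algebra.Formal_Power_Series"
begin

definition qcoef :: "(nat \<Rightarrow> real) \<Rightarrow> nat \<Rightarrow> real" where
  "qcoef g n = fps_nth (inverse (1 - Abs_fps (\<lambda>k. if k = 0 then 0 else g k))) n"

definition psi :: "nat \<Rightarrow> nat \<Rightarrow> real" where
  "psi d n = real n ^ d"

definition Dpsi :: "nat \<Rightarrow> real" where
  "Dpsi n =
    (if n mod 3 = 0 then 2 * real n * log (9/8) 2
     else if n mod 3 = 1 then 2 * real n * log (9/8) 2 + log (9/8) 3 - log (9/8) (real n + 2)
     else if n = 5 then log (9/8) 512
     else (real n + 2) * log (9/8) 2)"

end

theory Submission
  imports Defs
begin

text \<open>Expanding \<open>1 / (1 - \<Sum>k\<ge>1. k ^ d t ^ k)\<close>, \<open>q\<^sub>d(n)\<close> is the sum over all compositions of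
  \<open>n\<close> of the \<open>d\<close>-th power of the product of the parts. The largest such product \<open>M(n)\<close> is
  attained by the compositions into 3s with at most one 2 or 4, and every other composition has a
  product smaller by a factor at least \<open>8/9\<close>. So \<open>q\<^sub>d(n) / M(n) ^ d\<close> is the number of optimal
  compositions up to an error \<open>(8/9) ^ d 2 ^ (n - 1)\<close>; for \<open>n = 3t + 3, 3t + 2, 3t + 4\<close> that
  number is \<open>1\<close>, \<open>t + 1\<close> and \<open>(t + 1)(t + 4)/2\<close>. As \<open>M(n - 1) M(n + 1) / M(n)\<^sup>2\<close> is \<open>8/9\<close>, \<open>9/8\<close>
  and \<open>1\<close> for \<open>n \<equiv> 0, 1, 2 (mod 3)\<close>, once \<open>(9/8) ^ d\<close> beats the error terms the sign of
  \<open>q\<^sub>d(n)\<^sup>2 - q\<^sub>d(n - 1) q\<^sub>d(n + 1)\<close> is decided by that factor in the first two classes and by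
  \<open>(t + 1)(t + 4)/2 < (t + 2)\<^sup>2\<close> in the third.\<close>

section \<open>The coefficients \<open>q\<close>\<close>

lemma qcoef_0: "qcoef g 0 = 1"
  unfolding qcoef_def by (simp add: fps_inverse_def)

lemma qcoef_rec:
  assumes "0 < n"
  shows "qcoef g n = (\<Sum>i=1..n. g i * qcoef g (n - i))"
proof -
  define F :: "real fps" where "F = 1 - Abs_fps (\<lambda>k. if k = 0 then 0 else g k)"
  have F0: "fps_nth F 0 = 1" by (simp add: F_def)
  have "F * inverse F = 1" by (rule inverse_mult_eq_1') (simp add: F0)
  then have "(\<Sum>i=0..n. fps_nth F i * fps_nth (inverse F) (n - i)) = 0"
    using assms by (metis fps_mult_nth fps_one_nth neq0_conv)
  then have "fps_nth (inverse F) n - (\<Sum>i=1..n. g i * fps_nth (inverse F) (n - i)) = 0"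
    by (simp add: sum.atLeast_Suc_atMost F0 F_def sum_negf)
  then show ?thesis by (simp add: qcoef_def F_def)
qed

lemma qcoef_nonneg: "(\<And>i. 0 \<le> g i) \<Longrightarrow> 0 \<le> qcoef g n"
proof (induction n rule: less_induct)
  case (less n)
  then show ?case
    by (cases "n = 0") (auto simp: qcoef_0 qcoef_rec intro!: sum_nonneg)
qed

section \<open>Maximal products of compositions\<close>

text \<open>The largest product of the parts of a composition of \<open>n\<close>.\<close>
fun maxprod :: "nat \<Rightarrow> nat" where
  "maxprod 0 = 1"
| "maxprod (Suc 0) = 1"
| "maxprod (Suc (Suc 0)) = 2"
| "maxprod (Suc (Suc (Suc 0))) = 3"
| "maxprod (Suc (Suc (Suc (Suc 0)))) = 4"
| "maxprod (Suc (Suc (Suc (Suc (Suc n))))) = 3 * maxprod (Suc (Suc n))"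

lemma maxprod_add3: "2 \<le> n \<Longrightarrow> maxprod (n + 3) = 3 * maxprod n"
  by (induction n rule: maxprod.induct) (simp_all add: numeral_3_eq_3)

lemma maxprod_pos: "0 < maxprod n"
  by (induction n rule: maxprod.induct) auto

lemma maxprod_small: "1 \<le> i \<Longrightarrow> i \<le> 4 \<Longrightarrow> maxprod i = i"
  by (cases i rule: maxprod.cases) auto

lemma maxprod_large: "5 \<le> i \<Longrightarrow> 6 * i \<le> 5 * maxprod i"
proof (induction i rule: less_induct)
  case (less i)
  show ?case
  proof (cases "i \<ge> 8")
    case True
    then have "6 * (i - 3) \<le> 5 * maxprod (i - 3)" using less by simp
    moreover have "maxprod i = 3 * maxprod (i - 3)" using maxprod_add3[of "i - 3"] True by simp
    ultimately show ?thesis using True by linarith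
  next
    case False
    with less.prems have "i \<in> {5, 6, 7}" by auto
    then show ?thesis by (auto simp: numeral_eq_Suc)
  qed
qed

lemma maxprod_ge: "i \<le> maxprod i"
  using maxprod_large[of i] maxprod_small[of i] maxprod_pos[of i]
  by (cases "i = 0 \<or> 5 \<le> i") auto

lemma maxprod_mult_cases:
  "maxprod a * maxprod b = maxprod (a + b) \<or> 9 * (maxprod a * maxprod b) \<le> 8 * maxprod (a + b)"
proof (induction "a + b" arbitrary: a b rule: less_induct)
  case less
  let ?P = "\<lambda>x y. maxprod x * maxprod y = maxprod (x + y) \<or>
                   9 * (maxprod x * maxprod y) \<le> 8 * maxprod (x + y)"
  have reduce: "?P x y" if "5 \<le> x" "?P (x - 3) y" for x y
  proof -
    have "maxprod x = 3 * maxprod (x - 3)" "maxprod (x + y) = 3 * maxprod (x - 3 + y)"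
      using maxprod_add3[of "x - 3"] maxprod_add3[of "x - 3 + y"] \<open>5 \<le> x\<close>
      by (simp_all add: algebra_simps)
    then show ?thesis using that(2) by (auto simp: ac_simps)
  qed
  consider "5 \<le> a" | "5 \<le> b" | "a \<in> {0, 1, 2, 3, 4}" "b \<in> {0, 1, 2, 3, 4}" by force
  then show ?case
  proof cases
    case 1
    then show ?thesis using reduce less[of "a - 3" b] by simp
  next
    case 2
    then show ?thesis using reduce[of b a] less[of a "b - 3"] by (simp add: ac_simps)
  next
    case 3
    then show ?thesis by (auto simp: numeral_eq_Suc)
  qed
qed

lemma maxprod_supermult: "maxprod a * maxprod b \<le> maxprod (a + b)"
  using maxprod_mult_cases[of a b] by auto

lemma maxprod_part_le: "i \<le> n \<Longrightarrow> i * maxprod (n - i) \<le> maxprod n"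
  using maxprod_supermult[of i "n - i"] maxprod_ge[of i]
  by (metis le_add_diff_inverse mult_le_mono1 order_trans)

lemma maxprod_3k: "maxprod (3 * k) = 3 ^ k"
proof (induction k)
  case (Suc k)
  then show ?case
    using maxprod_add3[of "3 * k"] by (cases "k = 0") (auto simp: numeral_eq_Suc)
qed simp

lemma maxprod_3k2: "maxprod (3 * k + 2) = 2 * 3 ^ k"
  by (induction k) (use maxprod_add3[of "3 * _ + 2"] in \<open>simp_all add: numeral_eq_Suc\<close>)

lemma maxprod_3k4: "maxprod (3 * k + 4) = 4 * 3 ^ k"
  by (induction k) (use maxprod_add3[of "3 * _ + 4"] in \<open>simp_all add: numeral_eq_Suc\<close>)

lemma maxprod_products:
  "maxprod (3 * t + 2) * maxprod (3 * t + 4) = 8 * 9 ^ t"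
  "maxprod (3 * t + 3) * maxprod (3 * t + 3) = 9 * 9 ^ t"
  "maxprod (3 * t + 3) * maxprod (3 * t + 5) = 18 * 9 ^ t"
  "maxprod (3 * t + 4) * maxprod (3 * t + 4) = 16 * 9 ^ t"
  "maxprod (3 * t + 4) * maxprod (3 * t + 6) = 36 * 9 ^ t"
  "maxprod (3 * t + 5) * maxprod (3 * t + 5) = 36 * 9 ^ t"
  using maxprod_3k[of "t + 1"] maxprod_3k[of "t + 2"] maxprod_3k2[of t] maxprod_3k2[of "t + 1"]
    maxprod_3k4[of t]
  by (simp_all add: algebra_simps power_mult_distrib[symmetric])

text \<open>The first parts of the compositions of maximal product.\<close>
definition optimal_parts :: "nat \<Rightarrow> nat set" where
  "optimal_parts n = {i \<in> {1..n}. i * maxprod (n - i) = maxprod n}"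

lemma optimal_parts_subset: "optimal_parts n \<subseteq> {1..n}"
  by (auto simp: optimal_parts_def)

lemma finite_optimal_parts [simp]: "finite (optimal_parts n)"
  using finite_subset[OF optimal_parts_subset] by simp

lemma large_part_not_optimal:
  assumes "5 \<le> i" shows "i \<notin> optimal_parts n"
proof
  assume i: "i \<in> optimal_parts n"
  have "i < maxprod i" using maxprod_large[OF assms] assms by linarith
  then have "i * maxprod (n - i) < maxprod i * maxprod (n - i)" using maxprod_pos by simp
  also have "\<dots> \<le> maxprod n" using maxprod_supermult[of i "n - i"] i by (simp add: optimal_parts_def)
  finally show False using i by (simp add: optimal_parts_def)
qed

lemma optimal_parts_subset_1_4: "optimal_parts n \<subseteq> {1..4}"
proof
  fix i assume "i \<in> optimal_parts n"
  then show "i \<in> {1..4}"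
    using large_part_not_optimal[of i n] by (cases "5 \<le> i") (auto simp: optimal_parts_def)
qed

lemma optimal_parts_nonempty:
  assumes "0 < n" shows "optimal_parts n \<noteq> {}"
proof (cases "n \<le> 4")
  case True
  then have "n \<in> optimal_parts n" using assms maxprod_small[of n] by (simp add: optimal_parts_def)
  then show ?thesis by blast
next
  case False
  then have "3 \<in> optimal_parts n"
    using maxprod_add3[of "n - 3"] by (simp add: optimal_parts_def)
  then show ?thesis by blast
qed

lemma maxprod_part_gap:
  assumes "i \<in> {1..n} - optimal_parts n"
  shows "9 * (i * maxprod (n - i)) \<le> 8 * maxprod n"
proof (cases "5 \<le> i")
  case True
  have "54 * (i * maxprod (n - i)) \<le> 45 * (maxprod i * maxprod (n - i))"
    using maxprod_large[OF True] by simp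
  also have "\<dots> \<le> 45 * maxprod n" using maxprod_supermult[of i "n - i"] assms by simp
  finally show ?thesis by simp
next
  case False
  then have "maxprod i = i" using assms maxprod_small by simp
  then show ?thesis using maxprod_mult_cases[of i "n - i"] assms by (simp add: optimal_parts_def)
qed

lemma optimal_parts_add3:
  assumes "6 \<le> n" shows "optimal_parts (n + 3) = optimal_parts n"
proof -
  have "i \<in> optimal_parts (n + 3) \<longleftrightarrow> i \<in> optimal_parts n" if "i \<in> {1..4}" for i
  proof -
    have "n + 3 - i = (n - i) + 3" "2 \<le> n - i" using that assms by auto
    then have "maxprod (n + 3 - i) = 3 * maxprod (n - i)" using maxprod_add3 by presburger
    moreover have "maxprod (n + 3) = 3 * maxprod n" using maxprod_add3 assms by simp
    ultimately have "i * maxprod (n + 3 - i) = maxprod (n + 3) \<longleftrightarrow> i * maxprod (n - i) = maxprod n"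
      by simp
    moreover have "i \<le> n" using that assms by simp
    ultimately show ?thesis unfolding optimal_parts_def by simp
  qed
  then show ?thesis using optimal_parts_subset_1_4 by blast
qed

lemma optimal_parts_mod3: "6 \<le> n \<Longrightarrow> optimal_parts n = optimal_parts (6 + n mod 3)"
proof (induction n rule: less_induct)
  case (less n)
  show ?case
  proof (cases "n < 9")
    case True
    then have "n \<in> {6, 7, 8}" using less.prems by auto
    then show ?thesis by auto
  next
    case False
    then have "optimal_parts n = optimal_parts (n - 3)"
      using optimal_parts_add3[of "n - 3"] by simp
    also have "\<dots> = optimal_parts (6 + n mod 3)"
      using less.IH[of "n - 3"] False by (simp add: mod_if le_mod_geq)
    finally show ?thesis .
  qed
qed

lemma optimal_parts_small:
  "optimal_parts 2 = {2}" "optimal_parts 3 = {3}" "optimal_parts 4 = {2, 4}"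
  "optimal_parts 5 = {2, 3}" "optimal_parts 6 = {3}" "optimal_parts 7 = {2, 3, 4}"
  "optimal_parts 8 = {2, 3}"
  by code_simp+

lemma optimal_parts_3k3: "optimal_parts (3 * k + 3) = {3}"
  using optimal_parts_mod3[of "3 * k + 3"] by (cases "k = 0") (simp_all add: optimal_parts_small)

lemma optimal_parts_3k5: "optimal_parts (3 * k + 5) = {2, 3}"
  using optimal_parts_mod3[of "3 * k + 5"] by (cases "k = 0") (simp_all add: optimal_parts_small)

lemma optimal_parts_3k7: "optimal_parts (3 * k + 7) = {2, 3, 4}"
  using optimal_parts_mod3[of "3 * k + 7"] by (simp add: optimal_parts_small)

lemma sum_optimal_parts_3k3:
  "(\<Sum>i\<in>optimal_parts (3 * k + 3). f (3 * k + 3 - i)) = f (3 * k)"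
  unfolding optimal_parts_3k3 by simp

lemma sum_optimal_parts_3k5:
  "(\<Sum>i\<in>optimal_parts (3 * k + 5). f (3 * k + 5 - i)) = f (3 * k + 3) + f (3 * k + 2)"
  unfolding optimal_parts_3k5 by (simp add: ac_simps)

lemma sum_optimal_parts_3k7:
  "(\<Sum>i\<in>optimal_parts (3 * k + 7). f (3 * k + 7 - i))
    = f (3 * k + 5) + f (3 * k + 4) + f (3 * k + 3)"
  unfolding optimal_parts_3k7 by (simp add: ac_simps)

section \<open>The normalised coefficients\<close>

text \<open>At \<open>i = n\<close> the exponent is \<open>0\<close> by truncated subtraction, matching the single
  composition of \<open>0\<close>; so this counts the \<open>2 ^ (n - 1)\<close> compositions of \<open>n\<close> by their first part.\<close>
lemma sum_two_pow_compositions: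
  assumes "0 < n" shows "(\<Sum>i=1..n. (2::real) ^ (n - i - 1)) = 2 ^ (n - 1)"
  using assms
proof (induction n rule: nat_induct_non_zero)
  case (Suc n)
  have "(\<Sum>i=1..Suc n. (2::real) ^ (Suc n - i - 1))
      = 2 ^ (n - 1) + (\<Sum>i=Suc 1..Suc n. 2 ^ (Suc n - i - 1))"
    using Suc by (simp add: sum.atLeast_Suc_atMost)
  also have "(\<Sum>i=Suc 1..Suc n. (2::real) ^ (Suc n - i - 1)) = (\<Sum>i=1..n. 2 ^ (n - i - 1))"
    by (subst sum.shift_bounds_cl_Suc_ivl) simp
  finally show ?case using Suc by (cases n) simp_all
qed simp

definition qnorm :: "nat \<Rightarrow> nat \<Rightarrow> real" where
  "qnorm d n = qcoef (psi d) n / real (maxprod n) ^ d"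

lemma qcoef_psi_eq: "qcoef (psi d) n = qnorm d n * real (maxprod n) ^ d"
  using maxprod_pos[of n] by (simp add: qnorm_def)

lemma qnorm_0: "qnorm d 0 = 1"
  by (simp add: qnorm_def qcoef_0)

lemma qnorm_nonneg: "0 \<le> qnorm d n"
  unfolding qnorm_def by (simp add: qcoef_nonneg psi_def)

definition part_weight :: "nat \<Rightarrow> nat \<Rightarrow> real" where
  "part_weight n i = real (i * maxprod (n - i)) / real (maxprod n)"

lemma part_weight_nonneg: "0 \<le> part_weight n i"
  by (simp add: part_weight_def)

lemma part_weight_le_1:
  assumes "i \<le> n" shows "part_weight n i \<le> 1"
proof -
  have "real (i * maxprod (n - i)) \<le> real (maxprod n)"
    using maxprod_part_le[OF assms] by (simp only: of_nat_le_iff)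
  then show ?thesis using maxprod_pos[of n] by (simp add: part_weight_def)
qed

lemma part_weight_optimal: "i \<in> optimal_parts n \<Longrightarrow> part_weight n i = 1"
  using maxprod_pos[of n] by (simp add: part_weight_def optimal_parts_def)

lemma part_weight_gap:
  assumes "i \<in> {1..n} - optimal_parts n" shows "part_weight n i \<le> 8 / 9"
proof -
  have "real (9 * (i * maxprod (n - i))) \<le> real (8 * maxprod n)"
    using maxprod_part_gap[OF assms] by (simp only: of_nat_le_iff)
  then show ?thesis using maxprod_pos[of n] by (simp add: part_weight_def field_simps)
qed

lemma qnorm_rec:
  assumes "0 < n"
  shows "qnorm d n = (\<Sum>i=1..n. part_weight n i ^ d * qnorm d (n - i))"
proof -
  have "qnorm d n = (\<Sum>i=1..n. psi d i * qcoef (psi d) (n - i)) / real (maxprod n) ^ d"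
    unfolding qnorm_def using qcoef_rec[OF assms] by simp
  also have "\<dots> = (\<Sum>i=1..n. part_weight n i ^ d * qnorm d (n - i))"
    by (simp add: sum_divide_distrib qcoef_psi_eq psi_def part_weight_def
        power_divide power_mult_distrib ac_simps)
  finally show ?thesis .
qed

lemma qnorm_ge_optimal_sum:
  assumes "0 < n" shows "(\<Sum>i\<in>optimal_parts n. qnorm d (n - i)) \<le> qnorm d n"
proof -
  have "(\<Sum>i\<in>optimal_parts n. qnorm d (n - i))
      = (\<Sum>i\<in>optimal_parts n. part_weight n i ^ d * qnorm d (n - i))"
    by (simp add: part_weight_optimal)
  also have "\<dots> \<le> (\<Sum>i=1..n. part_weight n i ^ d * qnorm d (n - i))"
    using optimal_parts_subset by (intro sum_mono2) (auto simp: part_weight_nonneg qnorm_nonneg)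
  finally show ?thesis using qnorm_rec[OF assms] by simp
qed

lemma qnorm_ge_1: "1 \<le> qnorm d n"
proof (induction n rule: less_induct)
  case (less n)
  show ?case
  proof (cases "n = 0")
    case False
    then obtain i where i: "i \<in> optimal_parts n" using optimal_parts_nonempty by blast
    then have "1 \<le> qnorm d (n - i)" using less optimal_parts_subset by fastforce
    also have "\<dots> \<le> (\<Sum>j\<in>optimal_parts n. qnorm d (n - j))"
      using i by (intro member_le_sum) (simp_all add: qnorm_nonneg)
    also have "\<dots> \<le> qnorm d n" using False qnorm_ge_optimal_sum by simp
    finally show ?thesis .
  qed (simp add: qnorm_0)
qed

lemma qnorm_mult_ge_1: "1 \<le> qnorm d a * qnorm d b"
  using mult_mono[OF qnorm_ge_1[of d a] qnorm_ge_1[of d b]] qnorm_nonneg[of d a] by simp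

lemma qnorm_le_pow2: "qnorm d n \<le> 2 ^ (n - 1)"
proof (induction n rule: less_induct)
  case (less n)
  show ?case
  proof (cases "n = 0")
    case False
    have "qnorm d n \<le> (\<Sum>i=1..n. (2::real) ^ (n - i - 1))"
      unfolding qnorm_rec[OF False[unfolded neq0_conv]]
    proof (rule sum_mono)
      fix i assume i: "i \<in> {1..n}"
      have "part_weight n i ^ d \<le> 1"
        using i by (simp add: part_weight_le_1 part_weight_nonneg power_le_one)
      then have "part_weight n i ^ d * qnorm d (n - i) \<le> qnorm d (n - i)"
        by (simp add: mult_left_le_one_le part_weight_nonneg qnorm_nonneg)
      also have "\<dots> \<le> 2 ^ (n - i - 1)" using less[of "n - i"] i by simp
      finally show "part_weight n i ^ d * qnorm d (n - i) \<le> 2 ^ (n - i - 1)" .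
    qed
    then show ?thesis using False sum_two_pow_compositions by simp
  qed (simp add: qnorm_0)
qed

lemma qnorm_le_optimal_sum:
  assumes "0 < n"
  shows "qnorm d n \<le> (\<Sum>i\<in>optimal_parts n. qnorm d (n - i)) + (8/9) ^ d * 2 ^ (n - 1)"
proof -
  let ?t = "\<lambda>i. part_weight n i ^ d * qnorm d (n - i)"
  have "qnorm d n = (\<Sum>i\<in>optimal_parts n. ?t i) + (\<Sum>i\<in>{1..n} - optimal_parts n. ?t i)"
    using qnorm_rec[OF assms] sum.subset_diff[OF optimal_parts_subset[of n]]
    by (simp add: add.commute)
  also have "(\<Sum>i\<in>optimal_parts n. ?t i) = (\<Sum>i\<in>optimal_parts n. qnorm d (n - i))"
    by (simp add: part_weight_optimal)
  also have "(\<Sum>i\<in>{1..n} - optimal_parts n. ?t i)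
      \<le> (\<Sum>i\<in>{1..n} - optimal_parts n. (8/9) ^ d * 2 ^ (n - i - 1))"
  proof (rule sum_mono)
    fix i assume i: "i \<in> {1..n} - optimal_parts n"
    have "part_weight n i ^ d \<le> (8/9) ^ d"
      using part_weight_gap[OF i] by (simp add: power_mono part_weight_nonneg)
    moreover have "qnorm d (n - i) \<le> 2 ^ (n - i - 1)" by (rule qnorm_le_pow2)
    ultimately show "?t i \<le> (8/9) ^ d * 2 ^ (n - i - 1)"
      by (simp add: mult_mono qnorm_nonneg)
  qed
  also have "\<dots> \<le> (\<Sum>i=1..n. (8/9) ^ d * 2 ^ (n - i - 1))"
    by (intro sum_mono2) auto
  also have "\<dots> = (8/9) ^ d * 2 ^ (n - 1)"
    using sum_two_pow_compositions[OF assms] by (simp add: sum_distrib_left[symmetric])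
  finally show ?thesis by simp
qed

section \<open>Bounds along the residue classes mod 3\<close>

lemma qnorm_3k_le: "qnorm d (3 * k) \<le> 1 + (8/9) ^ d * 2 ^ (3 * k)"
proof (induction k)
  case (Suc k)
  let ?u = "(8/9::real) ^ d * 2 ^ (3 * k)"
  have u: "0 \<le> ?u" by simp
  have "qnorm d (3 * k + 3) \<le> qnorm d (3 * k) + (8/9) ^ d * 2 ^ (3 * k + 2)"
    using qnorm_le_optimal_sum[of "3 * k + 3" d] by (simp add: sum_optimal_parts_3k3)
  also have "\<dots> = qnorm d (3 * k) + 4 * ?u" by (simp add: power_add)
  finally have "qnorm d (3 * k + 3) \<le> 1 + 8 * ?u" using Suc u by linarith
  then show ?case by (simp add: algebra_simps power_add)
qed (simp add: qnorm_0)

lemma qnorm_3k3_le: "qnorm d (3 * k + 3) \<le> 1 + 8 * ((8/9) ^ d * 2 ^ (3 * k))"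
  using qnorm_3k_le[of d "Suc k"] by (simp add: algebra_simps power_add)

lemma qnorm_2_le: "qnorm d 2 \<le> 1 + 2 * (8/9) ^ d"
  using qnorm_le_optimal_sum[of 2 d] by (simp add: optimal_parts_small qnorm_0)

lemma qnorm_3k2_le: "qnorm d (3 * k + 2) \<le> real k + 1 + (8/9) ^ d * 2 ^ (3 * k + 2)"
proof (induction k)
  case 0
  have "qnorm d 2 \<le> 1 + 2 * (8/9) ^ d" by (rule qnorm_2_le)
  moreover have "(0::real) \<le> (8/9) ^ d" by simp
  ultimately have "qnorm d 2 \<le> 1 + (8/9) ^ d * 4" by linarith
  then show ?case by (simp add: numeral_2_eq_2)
next
  case (Suc k)
  let ?u = "(8/9::real) ^ d * 2 ^ (3 * k)"
  have u: "0 \<le> ?u" by simp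
  have "qnorm d (3 * k + 5) \<le> qnorm d (3 * k + 3) + qnorm d (3 * k + 2) + 16 * ?u"
    using qnorm_le_optimal_sum[of "3 * k + 5" d] by (simp add: sum_optimal_parts_3k5 power_add)
  moreover have "(8/9) ^ d * 2 ^ (3 * k + 2) = 4 * ?u" by (simp add: power_add)
  ultimately have "qnorm d (3 * k + 5) \<le> real k + 2 + 32 * ?u"
    using Suc qnorm_3k3_le[of d k] u by linarith
  then show ?case by (simp add: algebra_simps power_add)
qed

lemma qnorm_3k2_ge: "real k + 1 \<le> qnorm d (3 * k + 2)"
proof (induction k)
  case 0
  show ?case using qnorm_ge_1[of d 2] by (simp add: numeral_2_eq_2)
next
  case (Suc k)
  have "qnorm d (3 * k + 3) + qnorm d (3 * k + 2) \<le> qnorm d (3 * k + 5)"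
    using qnorm_ge_optimal_sum[of "3 * k + 5" d] by (simp add: sum_optimal_parts_3k5)
  then have "real k + 2 \<le> qnorm d (3 * k + 5)" using Suc qnorm_ge_1[of d "3 * k + 3"] by linarith
  then show ?case by (simp add: algebra_simps)
qed

lemma qnorm_3k5_ge: "real k + 2 \<le> qnorm d (3 * k + 5)"
  using qnorm_3k2_ge[of "k + 1" d] by (simp add: algebra_simps)

lemma qnorm_3k4_le:
  "qnorm d (3 * k + 4) \<le> (real k + 1) * (real k + 4) / 2 + (8/9) ^ d * 2 ^ (3 * k + 4)"
proof (induction k)
  case 0
  have "qnorm d 4 \<le> qnorm d 2 + 1 + 8 * (8/9) ^ d"
    using qnorm_le_optimal_sum[of 4 d] by (simp add: optimal_parts_small qnorm_0)
  moreover have "(0::real) \<le> (8/9) ^ d" by simp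
  ultimately have "qnorm d 4 \<le> 2 + 16 * (8/9) ^ d" using qnorm_2_le[of d] by linarith
  then show ?case by simp
next
  case (Suc k)
  let ?u = "(8/9::real) ^ d * 2 ^ (3 * k)"
  have u: "0 \<le> ?u" by simp
  have "qnorm d (3 * k + 7)
      \<le> qnorm d (3 * k + 5) + qnorm d (3 * k + 4) + qnorm d (3 * k + 3) + 64 * ?u"
    using qnorm_le_optimal_sum[of "3 * k + 7" d] by (simp add: sum_optimal_parts_3k7 power_add)
  moreover have "qnorm d (3 * k + 5) \<le> real k + 2 + 32 * ?u"
    using qnorm_3k2_le[of d "Suc k"] by (simp add: algebra_simps power_add)
  moreover have "(8/9) ^ d * 2 ^ (3 * k + 4) = 16 * ?u" by (simp add: power_add)
  moreover have "(real k + 2) * (real k + 5) / 2 = (real k + 1) * (real k + 4) / 2 + real k + 3"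
    by (simp add: field_simps)
  ultimately have "qnorm d (3 * k + 7) \<le> (real k + 2) * (real k + 5) / 2 + 128 * ?u"
    using Suc qnorm_3k3_le[of d k] u by linarith
  then show ?case by (simp add: algebra_simps power_add)
qed

section \<open>Log-concavity and log-convexity\<close>

lemma qnorm_mod3_0:
  assumes "2 ^ (6 * t + 6) < (9/8::real) ^ d"
  shows "qnorm d (3 * t + 2) * qnorm d (3 * t + 4) * 8 ^ d
    < qnorm d (3 * t + 3) * qnorm d (3 * t + 3) * 9 ^ d"
proof -
  have "qnorm d (3 * t + 2) * qnorm d (3 * t + 4) \<le> 2 ^ (3 * t + 1) * 2 ^ (3 * t + 3)"
    using qnorm_le_pow2[of d "3 * t + 2"] qnorm_le_pow2[of d "3 * t + 4"]
    by (intro mult_mono) (simp_all add: qnorm_nonneg ac_simps)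
  also have "\<dots> \<le> 2 ^ (6 * t + 6)" unfolding power_add[symmetric] by (rule power_increasing) simp_all
  finally have "qnorm d (3 * t + 2) * qnorm d (3 * t + 4) * 8 ^ d \<le> 2 ^ (6 * t + 6) * 8 ^ d"
    by (rule mult_right_mono) simp
  also have "\<dots> < 9 ^ d" using assms by (simp add: power_divide pos_less_divide_eq)
  also have "(9::real) ^ d \<le> qnorm d (3 * t + 3) * qnorm d (3 * t + 3) * 9 ^ d"
    using qnorm_mult_ge_1 by simp
  finally show ?thesis .
qed

lemma qnorm_mod3_1:
  assumes "2 ^ (6 * t + 8) < (real t + 2) * (9/8) ^ d"
  shows "qnorm d (3 * t + 4) * qnorm d (3 * t + 4) * 16 ^ d
    < qnorm d (3 * t + 3) * qnorm d (3 * t + 5) * 18 ^ d"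
proof -
  have "qnorm d (3 * t + 4) * qnorm d (3 * t + 4) \<le> 2 ^ (3 * t + 3) * 2 ^ (3 * t + 3)"
    using qnorm_le_pow2[of d "3 * t + 4"] by (intro mult_mono) (simp_all add: qnorm_nonneg ac_simps)
  also have "\<dots> \<le> 2 ^ (6 * t + 8)" unfolding power_add[symmetric] by (rule power_increasing) simp_all
  finally have "qnorm d (3 * t + 4) * qnorm d (3 * t + 4) * 16 ^ d \<le> 2 ^ (6 * t + 8) * 16 ^ d"
    by (rule mult_right_mono) simp
  also have "\<dots> < (real t + 2) * ((9/8) ^ d * 16 ^ d)" using assms by simp
  also have "(9/8) ^ d * 16 ^ d = (18::real) ^ d" by (simp add: power_mult_distrib[symmetric])
  also have "(real t + 2) * 18 ^ d \<le> qnorm d (3 * t + 3) * qnorm d (3 * t + 5) * 18 ^ d"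
    using mult_mono[OF qnorm_ge_1[of d "3 * t + 3"] qnorm_3k5_ge[of t d]] qnorm_nonneg
    by (intro mult_right_mono) simp_all
  finally show ?thesis .
qed

lemma qnorm_mod3_2:
  assumes "2 ^ (3 * t + 7) < (9/8::real) ^ d"
  shows "qnorm d (3 * t + 4) * qnorm d (3 * t + 6) < qnorm d (3 * t + 5) * qnorm d (3 * t + 5)"
proof -
  let ?u = "(8/9::real) ^ d * 2 ^ (3 * t + 4)" and ?N = "(real t + 1) * (real t + 4) / 2"
  have "(8/9::real) ^ d * 2 ^ (3 * t + 7) < 1"
    using assms by (simp add: power_divide field_simps)
  then have u: "0 \<le> ?u" "?u < 1/8" by (simp_all add: power_add)
  have "qnorm d (3 * t + 4) * qnorm d (3 * t + 6) \<le> (?N + ?u) * (1 + 4 * ?u)"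
  proof (rule mult_mono)
    show "qnorm d (3 * t + 6) \<le> 1 + 4 * ?u"
      using qnorm_3k_le[of d "t + 2"] by (simp add: algebra_simps power_add)
  qed (use qnorm_3k4_le u in \<open>simp_all add: qnorm_nonneg\<close>)
  also have "\<dots> \<le> (?N + 1/8) * (3/2)" using u by (intro mult_mono) simp_all
  also have "\<dots> < (real t + 2) * (real t + 2)" by (simp add: field_simps add_pos_nonneg)
  also have "\<dots> \<le> qnorm d (3 * t + 5) * qnorm d (3 * t + 5)"
    using qnorm_3k5_ge[of t d] by (intro mult_mono) simp_all
  finally show ?thesis .
qed

lemma qcoef_psi_pos: "0 < qcoef (psi d) n"
  using qnorm_ge_1[of d n] maxprod_pos[of n] by (simp add: qcoef_psi_eq)

lemma qcoef_psi_mult: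
  "qcoef (psi d) a * qcoef (psi d) b = qnorm d a * qnorm d b * real (maxprod a * maxprod b) ^ d"
  by (simp add: qcoef_psi_eq power_mult_distrib)

lemma qcoef_psi_mult_less:
  assumes "maxprod a * maxprod b = \<alpha> * m" "maxprod a' * maxprod b' = \<beta> * m"
    and "qnorm d a * qnorm d b * real \<alpha> ^ d < qnorm d a' * qnorm d b' * real \<beta> ^ d"
  shows "qcoef (psi d) a * qcoef (psi d) b < qcoef (psi d) a' * qcoef (psi d) b'"
proof -
  have "0 < m"
    using assms(1) maxprod_pos[of a] maxprod_pos[of b] by (metis mult_pos_pos nat_0_less_mult_iff)
  then have "qnorm d a * qnorm d b * real \<alpha> ^ d * real m ^ d
      < qnorm d a' * qnorm d b' * real \<beta> ^ d * real m ^ d"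
    using assms(3) by simp
  then show ?thesis by (simp add: qcoef_psi_mult assms(1,2) power_mult_distrib ac_simps)
qed

lemma qcoef_psi_mod3_0:
  assumes "n mod 3 = 0" "3 \<le> n" "2 ^ (2 * n) < (9/8::real) ^ d"
  shows "qcoef (psi d) (n - 1) * qcoef (psi d) (n + 1) < (qcoef (psi d) n)\<^sup>2"
proof -
  have "\<exists>t. n = 3 * t + 3" using assms(1,2) by presburger
  then obtain t where n: "n = 3 * t + 3" ..
  have "qcoef (psi d) (3 * t + 2) * qcoef (psi d) (3 * t + 4)
      < qcoef (psi d) (3 * t + 3) * qcoef (psi d) (3 * t + 3)"
    using qnorm_mod3_0[of t d] assms(3) n
    by (intro qcoef_psi_mult_less[OF maxprod_products(1,2)]) (simp add: algebra_simps)
  moreover have "n - 1 = 3 * t + 2" "n + 1 = 3 * t + 4" using n by simp_all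
  ultimately show ?thesis using n by (simp only: power2_eq_square)
qed

lemma qcoef_psi_mod3_1:
  assumes "n mod 3 = 1" "3 \<le> n" "2 ^ (2 * n) * 3 / (real n + 2) < (9/8::real) ^ d"
  shows "(qcoef (psi d) n)\<^sup>2 < qcoef (psi d) (n - 1) * qcoef (psi d) (n + 1)"
proof -
  have "\<exists>t. n = 3 * t + 4" using assms(1,2) by presburger
  then obtain t where n: "n = 3 * t + 4" ..
  have "2 ^ (2 * n) * 3 / (real n + 2) = 2 ^ (6 * t + 8) / (real t + 2)"
    using n by (simp add: field_simps)
  then have "2 ^ (6 * t + 8) < (real t + 2) * (9/8) ^ d"
    using assms(3) by (simp add: pos_divide_less_eq mult.commute)
  then have "qcoef (psi d) (3 * t + 4) * qcoef (psi d) (3 * t + 4)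
      < qcoef (psi d) (3 * t + 3) * qcoef (psi d) (3 * t + 5)"
    using qnorm_mod3_1[of t d]
    by (intro qcoef_psi_mult_less[OF maxprod_products(4,3)]) (simp add: algebra_simps)
  moreover have "n - 1 = 3 * t + 3" "n + 1 = 3 * t + 5" using n by simp_all
  ultimately show ?thesis using n by (simp only: power2_eq_square)
qed

lemma qcoef_psi_mod3_2:
  assumes "n mod 3 = 2" "3 \<le> n" "2 ^ (n + 2) < (9/8::real) ^ d"
  shows "qcoef (psi d) (n - 1) * qcoef (psi d) (n + 1) < (qcoef (psi d) n)\<^sup>2"
proof -
  have "\<exists>t. n = 3 * t + 5" using assms(1,2) by presburger
  then obtain t where n: "n = 3 * t + 5" ..
  have "qcoef (psi d) (3 * t + 4) * qcoef (psi d) (3 * t + 6)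
      < qcoef (psi d) (3 * t + 5) * qcoef (psi d) (3 * t + 5)"
    using qnorm_mod3_2[of t d] assms(3) n
    by (intro qcoef_psi_mult_less[OF maxprod_products(5,6)]) (simp add: algebra_simps)
  moreover have "n - 1 = 3 * t + 4" "n + 1 = 3 * t + 6" using n by simp_all
  ultimately show ?thesis using n by (simp only: power2_eq_square)
qed

lemma less_pow_of_log_less:
  assumes "log (9/8) V < real_of_int d" "1 \<le> V"
  shows "V < (9/8::real) ^ nat d"
proof -
  have "0 < d" using assms zero_le_log_cancel_iff[of "9/8" V] by linarith
  then show ?thesis using assms log_less_iff[of "9/8" V] by (simp add: powr_realpow[symmetric])
qed

lemma log_two_pow: "log (9/8) ((2::real) ^ m) = real m * log (9/8) 2"
  by (rule log_nat_power) simp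

lemma Dpsi_less_mod3_0:
  assumes "n mod 3 = 0" "Dpsi n < real_of_int d"
  shows "2 ^ (2 * n) < (9/8::real) ^ nat d"
proof (rule less_pow_of_log_less)
  show "log (9/8) (2 ^ (2 * n)) < real_of_int d" using assms unfolding Dpsi_def log_two_pow by simp
qed simp

lemma Dpsi_less_mod3_1:
  assumes "n mod 3 = 1" "Dpsi n < real_of_int d"
  shows "2 ^ (2 * n) * 3 / (real n + 2) < (9/8::real) ^ nat d"
proof (rule less_pow_of_log_less)
  show "log (9/8) (2 ^ (2 * n) * 3 / (real n + 2)) < real_of_int d"
    using assms unfolding Dpsi_def by (simp add: log_divide_pos log_mult_pos log_two_pow)
  have "(2::nat) ^ n \<le> 2 ^ (2 * n)" by (rule power_increasing) simp_all
  then have "n < 2 ^ (2 * n)" using less_exp[of n] by linarith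
  then have "real n < 2 ^ (2 * n)" by (metis of_nat_less_iff of_nat_numeral of_nat_power)
  moreover have "(1::real) \<le> 2 ^ (2 * n)" by simp
  ultimately have "real n + 2 \<le> 2 ^ (2 * n) * 3" by linarith
  then show "1 \<le> 2 ^ (2 * n) * 3 / (real n + 2)" by simp
qed

text \<open>For \<open>n = 5\<close> the threshold \<open>log 512\<close> is larger than the \<open>log (2 ^ 7)\<close> actually needed.\<close>
lemma Dpsi_less_mod3_2:
  assumes "n mod 3 = 2" "Dpsi n < real_of_int d"
  shows "2 ^ (n + 2) < (9/8::real) ^ nat d"
proof (rule less_pow_of_log_less)
  have "log (9/8) (2 ^ (n + 2)) \<le> Dpsi n"
    using assms(1) unfolding Dpsi_def log_two_pow by (auto simp: log_two_pow[of 9, simplified])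
  then show "log (9/8) (2 ^ (n + 2)) < real_of_int d" using assms(2) by linarith
qed (rule one_le_power; simp)

theorem corollary1:
  fixes n :: nat and d :: int
  assumes "n \<ge> 3" and "real_of_int d > Dpsi n"
  shows "(qcoef (psi (nat d)) n)\<^sup>2 / (qcoef (psi (nat d)) (n - 1) * qcoef (psi (nat d)) (n + 1)) < 1
         \<longleftrightarrow> n mod 3 = 1"
proof -
  let ?q = "qcoef (psi (nat d))"
  have "?q n ^ 2 / (?q (n - 1) * ?q (n + 1)) < 1 \<longleftrightarrow> ?q n ^ 2 < ?q (n - 1) * ?q (n + 1)"
    using qcoef_psi_pos by (simp add: divide_less_eq)
  moreover consider "n mod 3 = 0" | "n mod 3 = 1" | "n mod 3 = 2" by linarith
  then have "?q n ^ 2 < ?q (n - 1) * ?q (n + 1) \<longleftrightarrow> n mod 3 = 1"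
  proof cases
    case 1
    then show ?thesis
      using qcoef_psi_mod3_0[OF 1 assms(1) Dpsi_less_mod3_0[OF 1 assms(2)]] by simp
  next
    case 2
    then show ?thesis
      using qcoef_psi_mod3_1[OF 2 assms(1) Dpsi_less_mod3_1[OF 2 assms(2)]] by simp
  next
    case 3
    then show ?thesis
      using qcoef_psi_mod3_2[OF 3 assms(1) Dpsi_less_mod3_2[OF 3 assms(2)]] by simp
  qed
  ultimately show ?thesis by simp
qed

end
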